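(* Let $Y$ be a random variable whose moment generating function $E[e^{tY}]$ exists for $|t|<r_0$ for some $r_0>0$. Let $(Y_j)_{j\ge1}$ be mutually independent copies of $Y$, $S_0=0$, $S_k=Y_1+\cdots+Y_k$ for $k\ge1$. Let $r$ be a positive integer. Define $$\phi_n^Y(x)=\sum_{k=0}^{n}{n\brace k}_Y x^k,\qquad {n\brace k}_Y=\frac{1}{k!}\sum_{i=0}^{k}\binom{k}{i}(-1)^{k-i}E[S_i^n],$$ $$\phi_{n,r}^Y(x)=\sum_{k=0}^{n}{n+r\brace k+r}_{r,Y}x^k,\qquad {n+r\brace k+r}_{r,Y}=\frac{1}{k!}\sum_{j=0}^{k}\binom{k}{j}(-1)^{k-j}E\big[(S_j+r)^n\big].$$ Then for all integers $m,n\ge0$, $$\phi_{m+n,r}^Y(x)=\sum_{i=0}^{n}\sum_{k=0}^{m}\binom{n}{i}x^k\phi_i^Y(x)\frac{1}{k!}\sum_{j=k}^{m}\binom{m}{j}\sum_{l_1+\cdots+l_k=j}\binom{j}{l_1,\dots,l_k}E\Big[(S_k+r)^{n-i}\prod_{p=1}^{k}Y_p^{l_p}\Big]r^{m-j},$$ where the innermost sum runs over $k$-tuples $(l_1,\dots,l_k)$ of positive integers with sum $j$.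
   Context: $\phi_n^Y(x)$ and $\phi_{n,r}^Y(x)$ are the probabilistic Bell and probabilistic $r$-Bell polynomials associated with $Y$. For $k=0$ the sum over $(l_1,\dots,l_k)$ equals $1$ if $j=0$ and $0$ otherwise (empty product equal to $1$). $\binom{j}{l_1,\dots,l_k}$ is the multinomial coefficient. *)

theory Defs
  imports "HOL-Probability.Probability"
begin

definition psum :: "(nat \<Rightarrow> 'a \<Rightarrow> real) \<Rightarrow> nat \<Rightarrow> 'a \<Rightarrow> real" where
  "psum X k \<omega> = (\<Sum>j=1..k. X j \<omega>)"

definition stirlingY :: "'a measure \<Rightarrow> (nat \<Rightarrow> 'a \<Rightarrow> real) \<Rightarrow> nat \<Rightarrow> nat \<Rightarrow> real" where
  "stirlingY M X n k = (1 / fact k) *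
     (\<Sum>i=0..k. real (k choose i) * (-1) ^ (k - i) * (\<integral>\<omega>. (psum X i \<omega>) ^ n \<partial>M))"

definition bellY :: "'a measure \<Rightarrow> (nat \<Rightarrow> 'a \<Rightarrow> real) \<Rightarrow> nat \<Rightarrow> real \<Rightarrow> real" where
  "bellY M X n x = (\<Sum>k=0..n. stirlingY M X n k * x ^ k)"

definition rstirlingY :: "'a measure \<Rightarrow> (nat \<Rightarrow> 'a \<Rightarrow> real) \<Rightarrow> nat \<Rightarrow> nat \<Rightarrow> nat \<Rightarrow> real" where
  "rstirlingY M X r n k = (1 / fact k) *
     (\<Sum>j=0..k. real (k choose j) * (-1) ^ (k - j) * (\<integral>\<omega>. (psum X j \<omega> + real r) ^ n \<partial>M))"

definition rbellY :: "'a measure \<Rightarrow> (nat \<Rightarrow> 'a \<Rightarrow> real) \<Rightarrow> nat \<Rightarrow> nat \<Rightarrow> real \<Rightarrow> real" where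
  "rbellY M X r n x = (\<Sum>k=0..n. rstirlingY M X r n k * x ^ k)"

definition compositions :: "nat \<Rightarrow> nat \<Rightarrow> (nat \<Rightarrow> nat) set" where
  "compositions k j = {l \<in> {1..k} \<rightarrow>\<^sub>E {1..j}. (\<Sum>p=1..k. l p) = j}"

definition multinom :: "nat \<Rightarrow> nat \<Rightarrow> (nat \<Rightarrow> nat) \<Rightarrow> real" where
  "multinom j k l = fact j / (\<Prod>p=1..k. fact (l p))"

end

theory Submission
  imports Defs "HOL-Computational_Algebra.Formal_Power_Series"
begin

(* Let G(t) = \<Sum>q E[Y^q] t^q / q! be the formal moment generating function and write egf_nth F N
   for N! [t^N] F. Independence gives E[(S_A + r)^N] = egf_nth (e^{rt} G^|A|) N, hence
   {n brace k}_Y = egf_nth ((G - 1)^k) n / k! and phi_{N,r}(x) is the N-th EGF coefficient of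
   e^{rt} exp(x (G - 1)). Expanding G(t+s) - 1 = (G(t) - 1) + (G(t+s) - G(t)) in a shift s gives
     e^{r(t+s)} exp(x (G(t+s) - 1)) = exp(x (G(t) - 1)) \<Sum>k x^k / k! e^{r(t+s)} (G(t+s) - G(t))^k,
   and taking m! [s^m] on both sides yields the formula: the left side becomes phi_{m+n,r}, the factor
   exp(x (G - 1)) produces the phi_i, and by inclusion-exclusion over the compositions (l_1,...,l_k)
   the inner sums are the coefficients of m! [s^m] e^{r(t+s)} (G(t+s) - G(t))^k, since
   (G(t+s) - G(t))^k = \<Sum>A \<subseteq> {1..k} (-1)^(k-|A|) G(t+s)^|A| G(t)^(k-|A|).
   The bivariate series never appear: m! [s^m] is the m-th formal derivative in t, and the
   expansion in the shift becomes an identity between finite binomial sums. *)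

section \<open>Exponential generating functions\<close>

definition egf_nth :: "'a::field_char_0 fps \<Rightarrow> nat \<Rightarrow> 'a" where
  "egf_nth F n = fact n * fps_nth F n"

definition moment_egf :: "(nat \<Rightarrow> 'a::field_char_0) \<Rightarrow> 'a fps" where
  "moment_egf \<mu> = Abs_fps (\<lambda>n. \<mu> n / fact n)"

lemma egf_nth_moment_egf [simp]: "egf_nth (moment_egf \<mu>) n = \<mu> n"
  by (simp add: egf_nth_def moment_egf_def)

lemma egf_nth_fps_exp [simp]: "egf_nth (fps_exp a) n = a ^ n"
  by (simp add: egf_nth_def)

lemma egf_nth_one: "egf_nth 1 n = 0 ^ n"
  by (simp add: egf_nth_def)

lemma egf_nth_fps_const_mult [simp]: "egf_nth (fps_const c * F) n = c * egf_nth F n"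
  by (simp add: egf_nth_def)

lemma egf_nth_sum: "egf_nth (\<Sum>i\<in>S. F i) n = (\<Sum>i\<in>S. egf_nth (F i) n)"
  by (induction S rule: infinite_finite_induct) (simp_all add: egf_nth_def algebra_simps)

lemma egf_nth_mult:
  "egf_nth (F * G) n = (\<Sum>c\<le>n. of_nat (n choose c) * egf_nth F c * egf_nth G (n - c))"
  unfolding egf_nth_def fps_mult_nth sum_distrib_left atLeast0AtMost
  by (rule sum.cong) (simp_all add: binomial_fact)

lemma egf_nth_fps_nth_deriv: "egf_nth (fps_nth_deriv m F) c = egf_nth F (m + c)"
proof (induction m arbitrary: c)
  case (Suc m)
  have "egf_nth (fps_nth_deriv (Suc m) F) c = egf_nth (fps_nth_deriv m F) (Suc c)"
    unfolding fps_nth_deriv_commute egf_nth_def fps_deriv_nth by (simp add: algebra_simps)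
  then show ?case by (simp add: Suc.IH)
qed simp

lemma power_mult_nth_eq_0:
  fixes G H :: "'a::comm_semiring_1 fps"
  assumes "fps_nth G 0 = 0" "n < a"
  shows "fps_nth (G ^ a * H) n = 0"
  unfolding fps_mult_nth using startsby_zero_power_prefix[OF assms(1), of a] assms(2)
  by (intro sum.neutral) auto

lemma egf_nth_power_eq_0:
  fixes G :: "'a::field_char_0 fps"
  assumes "fps_nth G 0 = 0" "i < a"
  shows "egf_nth (G ^ a) i = 0"
  using startsby_zero_power_prefix[OF assms(1)] assms(2) by (simp add: egf_nth_def)

lemma fps_of_nat_mult_sign:
  "(of_nat c * (-1) ^ p :: 'a::comm_ring_1 fps) = fps_const (of_nat c * (-1) ^ p)"
  by (simp add: fps_of_nat fps_const_neg[symmetric] fps_const_power[symmetric]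
      fps_const_mult[symmetric] del: fps_const_neg fps_const_power fps_const_mult)

lemma mult_power_diff_one_expand:
  fixes F A :: "'a::comm_ring_1 fps"
  shows "F * (A - 1) ^ K = (\<Sum>j\<le>K. fps_const (of_nat (K choose j) * (-1) ^ (K - j)) * (F * A ^ j))"
  using binomial_ring[of A "-1" K]
  by (simp add: sum_distrib_left fps_of_nat_mult_sign[symmetric] ac_simps)

lemma egf_nth_mult_power_diff_one:
  fixes F A :: "'a::field_char_0 fps"
  shows "egf_nth (F * (A - 1) ^ K) n = (\<Sum>j\<le>K. of_nat (K choose j) * (-1) ^ (K - j) * egf_nth (F * A ^ j) n)"
  by (simp add: mult_power_diff_one_expand egf_nth_sum)

lemma fps_nth_deriv_mult_power_diff_one:
  fixes F A :: "'a::comm_ring_1 fps"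
  shows "fps_nth_deriv m (F * (A - 1) ^ K) =
    (\<Sum>j\<le>K. of_nat (K choose j) * (-1) ^ (K - j) * fps_nth_deriv m (F * A ^ j))"
  by (simp add: mult_power_diff_one_expand fps_nth_deriv_sum fps_of_nat_mult_sign)

lemma binomial_alternating_regroup:
  fixes A :: "'a::comm_ring_1"
  shows "(\<Sum>j\<le>K. of_nat (K choose j) * (-1) ^ (K - j) * P j) =
    (\<Sum>k\<le>K. of_nat (K choose k) * (A - 1) ^ (K - k) *
       (\<Sum>j\<le>k. of_nat (k choose j) * (-1) ^ (k - j) * P j * A ^ (k - j)))"
proof -
  have inner: "(\<Sum>i\<le>K - j. of_nat (K - j choose i) * ((-1) ^ i * A ^ i) * (A - 1) ^ (K - j - i)) = (-1) ^ (K - j)"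
    for j using binomial_ring[of "- A" "A - 1" "K - j"] by (simp add: power_minus[of A])
  have triangle: "(\<Sum>k\<le>K. \<Sum>j\<le>k. f k j) = (\<Sum>j\<le>K. \<Sum>i\<le>K - j. f (j + i) j)"
    for f :: "nat \<Rightarrow> nat \<Rightarrow> 'a"
  proof -
    have "(\<Sum>k\<le>K. \<Sum>j\<le>k. f k j) = (\<Sum>(j, i)\<in>{(j, i). j + i \<le> K}. f (j + i) j)"
      by (subst sum.triangle_reindex_eq) simp
    also have "\<dots> = (\<Sum>(j, i)\<in>(SIGMA j:{..K}. {..K - j}). f (j + i) j)"
      by (rule sum.cong) auto
    finally show ?thesis by (simp add: sum.Sigma)
  qed
  have "(\<Sum>k\<le>K. of_nat (K choose k) * (A - 1) ^ (K - k) *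
       (\<Sum>j\<le>k. of_nat (k choose j) * (-1) ^ (k - j) * P j * A ^ (k - j))) =
    (\<Sum>k\<le>K. \<Sum>j\<le>k. of_nat (K choose k) * of_nat (k choose j) * ((-1) ^ (k - j) * A ^ (k - j)) * (A - 1) ^ (K - k) * P j)"
    unfolding sum_distrib_left by (simp only: mult_ac)
  also have "\<dots> = (\<Sum>j\<le>K. \<Sum>i\<le>K - j. of_nat (K choose j) * P j *
      (of_nat (K - j choose i) * ((-1) ^ i * A ^ i) * (A - 1) ^ (K - j - i)))"
    unfolding triangle
  proof (intro sum.cong refl)
    fix j i assume "j \<in> {..K}" "i \<in> {..K - j}"
    then have "(K choose (j + i)) * ((j + i) choose j) = (K choose j) * (K - j choose i)"
      using choose_mult[of j "j + i" K] by simp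
    then have "of_nat (K choose (j + i)) * of_nat ((j + i) choose j) = (of_nat (K choose j) * of_nat (K - j choose i) :: 'a)"
      by (metis of_nat_mult)
    moreover have "K - (j + i) = K - j - i" by simp
    ultimately show "of_nat (K choose (j + i)) * of_nat ((j + i) choose j) * ((-1) ^ (j + i - j) * A ^ (j + i - j)) * (A - 1) ^ (K - (j + i)) * P j =
      of_nat (K choose j) * P j * (of_nat (K - j choose i) * ((-1) ^ i * A ^ i) * (A - 1) ^ (K - j - i))"
      by (simp only: add_diff_cancel_left' mult_ac)
  qed
  also have "\<dots> = (\<Sum>j\<le>K. of_nat (K choose j) * (-1) ^ (K - j) * P j)"
    by (simp only: inner flip: sum_distrib_left) (simp only: mult_ac)
  finally show ?thesis ..
qed

(* increment_egf m z G k = m! [s^m] e^{z(t+s)} (G(t+s) - G(t))^k, as a series in t: expand the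
   k-th power binomially and use that m! [s^m] F(t+s) is the m-th derivative of F. *)
definition increment_egf :: "nat \<Rightarrow> 'a::field_char_0 \<Rightarrow> 'a fps \<Rightarrow> nat \<Rightarrow> 'a fps" where
  "increment_egf m z G k = (\<Sum>j\<le>k. of_nat (k choose j) * (-1) ^ (k - j) *
     fps_nth_deriv m (fps_exp z * G ^ j) * G ^ (k - j))"

(* Both sides are the n-th EGF coefficient of exp(x G) \<Sum>k x^k / k! Q k; the truncations are
   harmless because G^a has order at least a and Q k vanishes for k > m. *)
lemma egf_nth_exp_series_mult:
  fixes G :: "'a::field_char_0 fps" and Q :: "nat \<Rightarrow> 'a fps"
  assumes G0: "fps_nth G 0 = 0" and Q_eq_0: "\<And>k. m < k \<Longrightarrow> Q k = 0"
  shows "(\<Sum>K\<le>m + n. x ^ K / fact K * (\<Sum>k\<le>K. of_nat (K choose k) * egf_nth (G ^ (K - k) * Q k) n)) =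
    (\<Sum>i\<le>n. \<Sum>k\<le>m. of_nat (n choose i) * x ^ k / fact k *
       (\<Sum>a\<le>i. x ^ a / fact a * egf_nth (G ^ a) i) * egf_nth (Q k) (n - i))"
proof -
  define T where "T k a = x ^ (k + a) / (fact k * fact a) * egf_nth (G ^ a * Q k) n" for k a
  have T_nonzero: "k \<le> m \<and> a \<le> n" if "T k a \<noteq> 0" for k a
  proof (rule ccontr)
    assume "\<not> (k \<le> m \<and> a \<le> n)"
    then have "fps_nth (G ^ a * Q k) n = 0"
      using Q_eq_0 power_mult_nth_eq_0[OF G0] by (auto simp: not_le)
    with that show False by (simp add: T_def egf_nth_def)
  qed
  have "(\<Sum>K\<le>m + n. x ^ K / fact K * (\<Sum>k\<le>K. of_nat (K choose k) * egf_nth (G ^ (K - k) * Q k) n)) =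
      (\<Sum>K\<le>m + n. \<Sum>k\<le>K. T k (K - k))"
    unfolding sum_distrib_left
  proof (intro sum.cong refl)
    fix K k :: nat assume "k \<in> {..K}"
    then show "x ^ K / fact K * (of_nat (K choose k) * egf_nth (G ^ (K - k) * Q k) n) = T k (K - k)"
      by (simp add: T_def binomial_fact)
  qed
  also have "\<dots> = (\<Sum>(k, a)\<in>{(k, a). k + a \<le> m + n}. T k a)"
    by (rule sum.triangle_reindex_eq[symmetric])
  also have "\<dots> = (\<Sum>(k, a)\<in>{..m} \<times> {..n}. T k a)"
    by (rule sum.mono_neutral_right)
       (auto intro: finite_subset[of _ "{..m + n} \<times> {..m + n}"] dest: T_nonzero)
  also have "\<dots> = (\<Sum>k\<le>m. \<Sum>a\<le>n. \<Sum>i\<le>n. x ^ (k + a) / (fact k * fact a) *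
      (of_nat (n choose i) * egf_nth (G ^ a) i * egf_nth (Q k) (n - i)))"
    unfolding sum.cartesian_product[symmetric] by (simp add: T_def egf_nth_mult sum_distrib_left)
  also have "\<dots> = (\<Sum>i\<le>n. \<Sum>k\<le>m. of_nat (n choose i) * x ^ k / fact k *
       (\<Sum>a\<le>n. x ^ a / fact a * egf_nth (G ^ a) i) * egf_nth (Q k) (n - i))"
  proof -
    have "(\<Sum>k\<le>m. \<Sum>a\<le>n. \<Sum>i\<le>n. f k a i) = (\<Sum>i\<le>n. \<Sum>k\<le>m. \<Sum>a\<le>n. f k a i)"
      for f :: "nat \<Rightarrow> nat \<Rightarrow> nat \<Rightarrow> 'a"
      by (simp only: sum.swap[of "f _"] sum.swap[of "\<lambda>k i. \<Sum>a\<le>n. f k a i"])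
    moreover have "(\<Sum>a\<le>n. x ^ (k + a) / (fact k * fact a) *
        (of_nat (n choose i) * egf_nth (G ^ a) i * egf_nth (Q k) (n - i))) =
      of_nat (n choose i) * x ^ k / fact k * (\<Sum>a\<le>n. x ^ a / fact a * egf_nth (G ^ a) i) * egf_nth (Q k) (n - i)"
      for i k
      unfolding sum_distrib_left sum_distrib_right by (intro sum.cong refl) (simp add: power_add field_simps)
    ultimately show ?thesis by simp
  qed
  also have "\<dots> = (\<Sum>i\<le>n. \<Sum>k\<le>m. of_nat (n choose i) * x ^ k / fact k *
       (\<Sum>a\<le>i. x ^ a / fact a * egf_nth (G ^ a) i) * egf_nth (Q k) (n - i))"
    by (intro sum.cong refl arg_cong2[where f = times] sum.mono_neutral_right)
       (auto simp: egf_nth_power_eq_0[OF G0])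
  finally show ?thesis .
qed

section \<open>Compositions and inclusion-exclusion\<close>

lemma compositions_0: "compositions 0 j = (if j = 0 then {\<lambda>_. undefined} else {})"
  unfolding compositions_def by (auto simp: PiE_def extensional_def)

lemma finite_compositions: "finite (compositions k j)"
  unfolding compositions_def
  by (rule finite_subset[of _ "{1..k} \<rightarrow>\<^sub>E {1..j}"]) (auto intro: finite_PiE)

lemma compositions_eq_empty: "j < k \<Longrightarrow> compositions k j = {}"
proof (rule ccontr)
  assume "j < k" "compositions k j \<noteq> {}"
  then obtain l where l: "l \<in> {1..k} \<rightarrow>\<^sub>E {1..j}" "(\<Sum>p=1..k. l p) = j"
    by (auto simp: compositions_def)
  have "(\<Sum>p=1..k. (1::nat)) \<le> (\<Sum>p=1..k. l p)"
    by (rule sum_mono) (use l(1) in \<open>auto simp: PiE_def Pi_def\<close>)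
  with l(2) \<open>j < k\<close> show False by simp
qed

lemma bij_betw_compositions_Suc:
  "bij_betw (\<lambda>(c, l). l(Suc k := c)) (SIGMA c:{1..j}. compositions k (j - c)) (compositions (Suc k) j)"
proof (rule bij_betwI')
  fix u v assume "u \<in> (SIGMA c:{1..j}. compositions k (j - c))" "v \<in> (SIGMA c:{1..j}. compositions k (j - c))"
  moreover obtain c l c' l' where [simp]: "u = (c, l)" "v = (c', l')" by fastforce
  ultimately have "l \<in> extensional {1..k}" "l' \<in> extensional {1..k}"
    by (auto simp: compositions_def PiE_def)
  then have "l(Suc k := c) = l'(Suc k := c') \<Longrightarrow> l = l'"
    by (metis extensional_arb fun_upd_other atLeastAtMost_iff lessI not_less ext)
  then show "((\<lambda>(c, l). l(Suc k := c)) u = (\<lambda>(c, l). l(Suc k := c)) v) = (u = v)"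
    by (auto dest: fun_cong[where x = "Suc k"])
next
  fix u assume "u \<in> (SIGMA c:{1..j}. compositions k (j - c))"
  then obtain c l where [simp]: "u = (c, l)" and c: "1 \<le> c" "c \<le> j"
    and l: "l \<in> {1..k} \<rightarrow>\<^sub>E {1..j - c}" "(\<Sum>p=1..k. l p) = j - c"
    by (auto simp: compositions_def)
  have "(\<Sum>p=1..k. (l(Suc k := c)) p) = (\<Sum>p=1..k. l p)" by (rule sum.cong) auto
  then have "(\<Sum>p=1..Suc k. (l(Suc k := c)) p) = j" using l(2) c by simp
  moreover have "l(Suc k := c) \<in> {1..Suc k} \<rightarrow>\<^sub>E {1..j}"
    using l(1) c by (auto simp: PiE_def Pi_def extensional_def)
  ultimately show "(\<lambda>(c, l). l(Suc k := c)) u \<in> compositions (Suc k) j"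
    by (simp add: compositions_def)
next
  fix L assume "L \<in> compositions (Suc k) j"
  then have L: "L \<in> {1..Suc k} \<rightarrow>\<^sub>E {1..j}" and sum_L: "(\<Sum>p=1..k. L p) = j - L (Suc k)"
    by (auto simp: compositions_def)
  define l where "l = L(Suc k := undefined)"
  have "(\<Sum>p=1..k. l p) = (\<Sum>p=1..k. L p)" by (rule sum.cong) (auto simp: l_def)
  moreover have "L p \<le> j - L (Suc k)" if "p \<in> {1..k}" for p
    using member_le_sum[of p "{1..k}" L] that sum_L by simp
  ultimately have "(L (Suc k), l) \<in> (SIGMA c:{1..j}. compositions k (j - c))"
    using L sum_L by (auto simp: compositions_def PiE_def Pi_def extensional_def l_def)
  moreover have "L = l(Suc k := L (Suc k))" by (auto simp: l_def)
  ultimately show "\<exists>u\<in>(SIGMA c:{1..j}. compositions k (j - c)). L = (\<lambda>(c, l). l(Suc k := c)) u"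
    by force
qed

lemma sum_compositions_Suc:
  fixes y :: "nat \<Rightarrow> real"
  shows "(\<Sum>l\<in>compositions (Suc k) j. multinom j (Suc k) l * (\<Prod>p=1..Suc k. y p ^ l p)) =
    (\<Sum>c=1..j. real (j choose c) * y (Suc k) ^ c *
       (\<Sum>l\<in>compositions k (j - c). multinom (j - c) k l * (\<Prod>p=1..k. y p ^ l p)))"
proof -
  have "(\<Sum>l\<in>compositions (Suc k) j. multinom j (Suc k) l * (\<Prod>p=1..Suc k. y p ^ l p)) =
      (\<Sum>u\<in>(SIGMA c:{1..j}. compositions k (j - c)).
         (\<lambda>l. multinom j (Suc k) l * (\<Prod>p=1..Suc k. y p ^ l p)) ((\<lambda>(c, l). l(Suc k := c)) u))"
    by (rule sum.reindex_bij_betw[OF bij_betw_compositions_Suc, symmetric])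
  also have "\<dots> = (\<Sum>c=1..j. \<Sum>l\<in>compositions k (j - c).
      multinom j (Suc k) (l(Suc k := c)) * (\<Prod>p=1..Suc k. y p ^ (l(Suc k := c)) p))"
    by (subst sum.Sigma) (auto simp: finite_compositions split_beta)
  also have "\<dots> = (\<Sum>c=1..j. \<Sum>l\<in>compositions k (j - c).
      real (j choose c) * y (Suc k) ^ c * (multinom (j - c) k l * (\<Prod>p=1..k. y p ^ l p)))"
  proof (intro sum.cong refl)
    fix c l assume "c \<in> {1..j}" "l \<in> compositions k (j - c)"
    have unchanged: "(\<Prod>p=1..k. f ((l(Suc k := c)) p)) = (\<Prod>p=1..k. f (l p))" for f :: "nat \<Rightarrow> real"
      by (rule prod.cong) auto
    have "multinom j (Suc k) (l(Suc k := c)) = fact j / ((\<Prod>p=1..k. fact (l p)) * fact c)"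
      unfolding multinom_def using unchanged[of fact] by simp
    also have "\<dots> = real (j choose c) * multinom (j - c) k l"
      using \<open>c \<in> {1..j}\<close> by (simp add: multinom_def binomial_fact field_simps)
    finally show "multinom j (Suc k) (l(Suc k := c)) * (\<Prod>p=1..Suc k. y p ^ (l(Suc k := c)) p) =
      real (j choose c) * y (Suc k) ^ c * (multinom (j - c) k l * (\<Prod>p=1..k. y p ^ l p))"
      using prod.cong[of "{1..k}" "{1..k}" "\<lambda>p. y p ^ (l(Suc k := c)) p" "\<lambda>p. y p ^ l p"] by simp
  qed
  finally show ?thesis
    by (simp add: sum_distrib_left)
qed

lemma sum_subsets_Suc:
  fixes y :: "nat \<Rightarrow> real"
  shows "(\<Sum>A\<in>Pow {1..Suc k}. (-1) ^ (Suc k - card A) * (\<Sum>p\<in>A. y p) ^ j) =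
    (\<Sum>c=1..j. real (j choose c) * y (Suc k) ^ c *
       (\<Sum>A\<in>Pow {1..k}. (-1) ^ (k - card A) * (\<Sum>p\<in>A. y p) ^ (j - c)))"
proof -
  have split: "Pow {1..Suc k} = Pow {1..k} \<union> insert (Suc k) ` Pow {1..k}"
    by (simp add: atLeastAtMostSuc_conv Pow_insert)
  have inj: "inj_on (insert (Suc k)) (Pow {1..k})"
    by (rule inj_onI) (metis PowD atLeastAtMost_iff insert_ident Suc_n_not_le_n subsetD)
  have card_le: "card A \<le> k" if "A \<in> Pow {1..k}" for A
    using that card_mono[of "{1..k}" A] by auto
  have finite: "finite A" if "A \<in> Pow {1..k}" for A
    using that finite_subset by auto
  have "(\<Sum>A\<in>Pow {1..Suc k}. (-1) ^ (Suc k - card A) * (\<Sum>p\<in>A. y p) ^ j) =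
      (\<Sum>A\<in>Pow {1..k}. (-1) ^ (Suc k - card A) * (\<Sum>p\<in>A. y p) ^ j) +
      (\<Sum>A\<in>insert (Suc k) ` Pow {1..k}. (-1) ^ (Suc k - card A) * (\<Sum>p\<in>A. y p) ^ j)"
    unfolding split by (rule sum.union_disjoint) auto
  also have "\<dots> = (\<Sum>A\<in>Pow {1..k}. - ((-1) ^ (k - card A) * (\<Sum>p\<in>A. y p) ^ j)) +
      (\<Sum>A\<in>Pow {1..k}. (-1) ^ (k - card A) * (y (Suc k) + (\<Sum>p\<in>A. y p)) ^ j)"
    unfolding sum.reindex[OF inj]
    by (intro arg_cong2[where f = "(+)"] sum.cong refl)
       (auto simp: card_le finite Suc_diff_le subset_eq card_insert_if)
  also have "\<dots> = (\<Sum>A\<in>Pow {1..k}. (-1) ^ (k - card A) * ((y (Suc k) + (\<Sum>p\<in>A. y p)) ^ j - (\<Sum>p\<in>A. y p) ^ j))"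
    by (simp add: sum_negf[symmetric] sum.distrib[symmetric] algebra_simps)
  also have "\<dots> = (\<Sum>A\<in>Pow {1..k}. (-1) ^ (k - card A) *
       (\<Sum>c=1..j. real (j choose c) * y (Suc k) ^ c * (\<Sum>p\<in>A. y p) ^ (j - c)))"
  proof (intro sum.cong refl)
    fix A
    have "{..j} = insert 0 {1..j}" by auto
    then show "(-1) ^ (k - card A) * ((y (Suc k) + (\<Sum>p\<in>A. y p)) ^ j - (\<Sum>p\<in>A. y p) ^ j) =
      (-1) ^ (k - card A) * (\<Sum>c=1..j. real (j choose c) * y (Suc k) ^ c * (\<Sum>p\<in>A. y p) ^ (j - c))"
      by (simp add: binomial_ring)
  qed
  also have "\<dots> = (\<Sum>c=1..j. real (j choose c) * y (Suc k) ^ c *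
       (\<Sum>A\<in>Pow {1..k}. (-1) ^ (k - card A) * (\<Sum>p\<in>A. y p) ^ (j - c)))"
    unfolding sum_distrib_left by (subst sum.swap) (simp add: mult_ac)
  finally show ?thesis .
qed

(* Both sides are the part of (y 1 + ... + y k)^j in which every y p occurs. *)
lemma sum_compositions_eq_sum_subsets:
  fixes y :: "nat \<Rightarrow> real"
  shows "(\<Sum>l\<in>compositions k j. multinom j k l * (\<Prod>p=1..k. y p ^ l p)) =
    (\<Sum>A\<in>Pow {1..k}. (-1) ^ (k - card A) * (\<Sum>p\<in>A. y p) ^ j)"
proof (induction k arbitrary: j)
  case 0
  show ?case by (simp add: compositions_0 multinom_def)
next
  case (Suc k)
  then show ?case by (simp only: sum_compositions_Suc sum_subsets_Suc)
qed

lemma sum_binomial_compositions: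
  fixes y :: "nat \<Rightarrow> real"
  shows "(\<Sum>j=k..m. real (m choose j) *
       (\<Sum>l\<in>compositions k j. multinom j k l * (\<Prod>p=1..k. y p ^ l p)) * z ^ (m - j)) =
    (\<Sum>A\<in>Pow {1..k}. (-1) ^ (k - card A) * ((\<Sum>p\<in>A. y p) + z) ^ m)"
proof -
  have "(\<Sum>j=k..m. real (m choose j) *
       (\<Sum>l\<in>compositions k j. multinom j k l * (\<Prod>p=1..k. y p ^ l p)) * z ^ (m - j)) =
    (\<Sum>j\<le>m. real (m choose j) *
       (\<Sum>l\<in>compositions k j. multinom j k l * (\<Prod>p=1..k. y p ^ l p)) * z ^ (m - j))"
    by (rule sum.mono_neutral_left) (auto simp: compositions_eq_empty)
  also have "\<dots> = (\<Sum>A\<in>Pow {1..k}. (-1) ^ (k - card A) *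
      (\<Sum>j\<le>m. real (m choose j) * (\<Sum>p\<in>A. y p) ^ j * z ^ (m - j)))"
    unfolding sum_compositions_eq_sum_subsets sum_distrib_left sum_distrib_right
    by (subst sum.swap) (simp add: mult_ac)
  finally show ?thesis
    by (simp add: binomial_ring)
qed

lemma sum_Pow_card:
  assumes "finite S"
  shows "(\<Sum>A\<in>Pow S. g (card A)) = (\<Sum>j\<le>card S. of_nat (card S choose j) * g j)"
proof -
  have "(\<Sum>A\<in>Pow S. g (card A)) = (\<Sum>j\<le>card S. \<Sum>A\<in>{A\<in>Pow S. card A = j}. g (card A))"
    by (rule sum.group[symmetric]) (use assms card_mono in auto)
  also have "\<dots> = (\<Sum>j\<le>card S. of_nat (card S choose j) * g j)"
  proof (intro sum.cong refl)
    fix j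
    have "{A\<in>Pow S. card A = j} = {B. B \<subseteq> S \<and> card B = j}" by auto
    then have "card {A\<in>Pow S. card A = j} = card S choose j"
      using n_subsets[OF assms] by simp
    then show "(\<Sum>A\<in>{A\<in>Pow S. card A = j}. g (card A)) = of_nat (card S choose j) * g j"
      by simp
  qed
  finally show ?thesis .
qed

section \<open>Moments of sums of independent variables\<close>

inductive polynomial_in :: "(nat \<Rightarrow> 'a \<Rightarrow> real) \<Rightarrow> ('a \<Rightarrow> real) \<Rightarrow> bool" for X where
  const: "polynomial_in X (\<lambda>\<omega>. c)"
| mult_var: "polynomial_in X f \<Longrightarrow> p \<ge> 1 \<Longrightarrow> polynomial_in X (\<lambda>\<omega>. f \<omega> * X p \<omega>)"
| add: "polynomial_in X f \<Longrightarrow> polynomial_in X g \<Longrightarrow> polynomial_in X (\<lambda>\<omega>. f \<omega> + g \<omega>)"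

lemma polynomial_in_mult:
  assumes "polynomial_in X f" "polynomial_in X g"
  shows "polynomial_in X (\<lambda>\<omega>. f \<omega> * g \<omega>)"
  using assms(2)
proof (induction rule: polynomial_in.induct)
  case (const c)
  from assms(1) show ?case
  proof (induction rule: polynomial_in.induct)
    case (mult_var f p)
    then show ?case using polynomial_in.mult_var[of X "\<lambda>\<omega>. f \<omega> * c" p] by (simp add: ac_simps)
  qed (auto simp: distrib_right intro: polynomial_in.intros)
next
  case (mult_var g p)
  then show ?case using polynomial_in.mult_var[of X "\<lambda>\<omega>. f \<omega> * g \<omega>" p] by (simp add: mult.assoc)
next
  case (add g1 g2)
  then show ?case using polynomial_in.add[of X "\<lambda>\<omega>. f \<omega> * g1 \<omega>" "\<lambda>\<omega>. f \<omega> * g2 \<omega>"]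
    by (simp add: distrib_left)
qed

lemma polynomial_in_var: "p \<ge> 1 \<Longrightarrow> polynomial_in X (X p)"
  using polynomial_in.mult_var[OF polynomial_in.const[of X 1], of p] by simp

lemma polynomial_in_power: "polynomial_in X f \<Longrightarrow> polynomial_in X (\<lambda>\<omega>. f \<omega> ^ n)"
  by (induction n) (auto intro: polynomial_in.const polynomial_in_mult)

lemma polynomial_in_sum:
  "finite A \<Longrightarrow> (\<And>a. a \<in> A \<Longrightarrow> polynomial_in X (f a)) \<Longrightarrow> polynomial_in X (\<lambda>\<omega>. \<Sum>a\<in>A. f a \<omega>)"
  by (induction A rule: finite_induct) (auto intro: polynomial_in.intros)

lemma polynomial_in_prod:
  "finite A \<Longrightarrow> (\<And>a. a \<in> A \<Longrightarrow> polynomial_in X (f a)) \<Longrightarrow> polynomial_in X (\<lambda>\<omega>. \<Prod>a\<in>A. f a \<omega>)"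
  by (induction A rule: finite_induct) (auto intro: polynomial_in.const polynomial_in_mult)

lemma polynomial_in_sum_vars:
  "finite A \<Longrightarrow> A \<subseteq> {1..} \<Longrightarrow> polynomial_in X (\<lambda>\<omega>. \<Sum>p\<in>A. X p \<omega>)"
  by (rule polynomial_in_sum) (auto intro!: polynomial_in_var)

lemmas polynomial_in_intros =
  polynomial_in.const polynomial_in.add polynomial_in_mult polynomial_in_power
  polynomial_in_var polynomial_in_sum_vars polynomial_in_prod

locale indep_moments = prob_space M for M :: "'a measure" +
  fixes X :: "nat \<Rightarrow> 'a \<Rightarrow> real" and \<mu> :: "nat \<Rightarrow> real"
  assumes indep: "indep_vars (\<lambda>_. borel) X {1..}"
    and integrable_power: "\<And>j l. j \<ge> 1 \<Longrightarrow> integrable M (\<lambda>\<omega>. X j \<omega> ^ l)"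
    and integral_power: "\<And>j l. j \<ge> 1 \<Longrightarrow> (\<integral>\<omega>. X j \<omega> ^ l \<partial>M) = \<mu> l"
begin

lemma integrable_monomial:
  assumes "finite B" "B \<subseteq> {1..}"
  shows "integrable M (\<lambda>\<omega>. \<Prod>q\<in>B. X q \<omega> ^ l q)"
proof (rule indep_vars_integrable[OF assms(1)])
  show "indep_vars (\<lambda>_. borel) (\<lambda>q \<omega>. X q \<omega> ^ l q) B"
    using indep_vars_compose2[OF indep_vars_subset[OF indep assms(2)], of "\<lambda>q y. y ^ l q" "\<lambda>_. borel"]
    by simp
qed (use assms integrable_power in auto)

(* Multiplying by a variable raises one exponent of the monomial, so induction on the
   polynomial reduces everything to monomials, which are integrable by independence. *)
lemma integrable_polynomial_mult_monomial:
  assumes "polynomial_in X f" "finite B" "B \<subseteq> {1..}"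
  shows "integrable M (\<lambda>\<omega>. f \<omega> * (\<Prod>q\<in>B. X q \<omega> ^ l q))"
  using assms
proof (induction arbitrary: B l rule: polynomial_in.induct)
  case (const c)
  then show ?case using integrable_monomial[of B l] by simp
next
  case (mult_var f p)
  define l' where "l' = l(p := Suc (if p \<in> B then l p else 0))"
  have "(\<Prod>q\<in>B - {p}. X q \<omega> ^ l' q) = (\<Prod>q\<in>B - {p}. X q \<omega> ^ l q)" for \<omega>
    by (intro prod.cong) (auto simp: l'_def)
  then have "(\<Prod>q\<in>insert p B. X q \<omega> ^ l' q) = X p \<omega> * (\<Prod>q\<in>B. X q \<omega> ^ l q)" for \<omega>
    using mult_var.prems(1)
    by (cases "p \<in> B") (simp_all add: prod.insert_remove prod.remove l'_def Diff_insert_absorb)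
  then show ?case using mult_var.IH[of "insert p B" l'] mult_var.prems mult_var.hyps
    by (simp add: mult.assoc)
next
  case (add f g)
  then show ?case by (simp add: distrib_right)
qed

lemma integrable_polynomial: "polynomial_in X f \<Longrightarrow> integrable M f"
  using integrable_polynomial_mult_monomial[of f "{}"] by simp

lemma indep_var_disjoint_sums:
  assumes "A \<inter> B = {}" "A \<subseteq> {1..}" "B \<subseteq> {1..}"
  shows "indep_var borel (\<lambda>\<omega>. \<Sum>p\<in>A. X p \<omega>) borel (\<lambda>\<omega>. \<Sum>p\<in>B. X p \<omega>)"
proof -
  have sum_measurable: "(\<lambda>f. \<Sum>p\<in>C. f p :: real) \<in> borel_measurable (Pi\<^sub>M C (\<lambda>_. borel))" for C :: "nat set"
    by measurable
  show ?thesis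
    using indep_var_compose[OF indep_var_restrict[OF indep assms] sum_measurable sum_measurable]
    by (simp add: comp_def)
qed

lemma integral_mult_disjoint_sums:
  assumes "finite A" "finite B" "A \<inter> B = {}" "A \<subseteq> {1..}" "B \<subseteq> {1..}"
    and "polynomial_in X (\<lambda>\<omega>. g (\<Sum>p\<in>A. X p \<omega>))" "polynomial_in X (\<lambda>\<omega>. h (\<Sum>p\<in>B. X p \<omega>))"
    and [measurable]: "g \<in> borel_measurable borel" "h \<in> borel_measurable borel"
  shows "(\<integral>\<omega>. g (\<Sum>p\<in>A. X p \<omega>) * h (\<Sum>p\<in>B. X p \<omega>) \<partial>M) =
    (\<integral>\<omega>. g (\<Sum>p\<in>A. X p \<omega>) \<partial>M) * (\<integral>\<omega>. h (\<Sum>p\<in>B. X p \<omega>) \<partial>M)"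
  using assms
  by (intro indep_var_lebesgue_integral indep_var_compose[unfolded comp_def, OF indep_var_disjoint_sums])
     (auto intro: integrable_polynomial)

lemma integral_power_sum:
  assumes "finite A" "A \<subseteq> {1..}"
  shows "(\<integral>\<omega>. (\<Sum>p\<in>A. X p \<omega>) ^ d \<partial>M) = egf_nth (moment_egf \<mu> ^ card A) d"
  using assms
proof (induction A arbitrary: d rule: finite_induct)
  case empty
  then show ?case by (simp add: egf_nth_one prob_space)
next
  case (insert a A)
  have expand: "(\<Sum>p\<in>insert a A. X p \<omega>) ^ d =
      (\<Sum>c\<le>d. real (d choose c) * ((\<Sum>p\<in>{a}. X p \<omega>) ^ c * (\<Sum>p\<in>A. X p \<omega>) ^ (d - c)))" for \<omega>
    using insert.hyps by (simp add: binomial_ring mult_ac)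
  have "(\<integral>\<omega>. (\<Sum>p\<in>insert a A. X p \<omega>) ^ d \<partial>M) =
      (\<Sum>c\<le>d. real (d choose c) * (\<integral>\<omega>. (\<Sum>p\<in>{a}. X p \<omega>) ^ c * (\<Sum>p\<in>A. X p \<omega>) ^ (d - c) \<partial>M))"
    unfolding expand using insert.prems insert.hyps
    by (subst Bochner_Integration.integral_sum) (auto intro!: integrable_polynomial polynomial_in_intros)
  also have "\<dots> = (\<Sum>c\<le>d. real (d choose c) * \<mu> c * egf_nth (moment_egf \<mu> ^ card A) (d - c))"
    using insert.prems insert.hyps
    by (subst integral_mult_disjoint_sums[where g = "\<lambda>s. s ^ _" and h = "\<lambda>s. s ^ _"])
       (auto simp: integral_power insert.IH mult.assoc intro!: polynomial_in_intros)
  also have "\<dots> = egf_nth (moment_egf \<mu> ^ card (insert a A)) d"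
    using insert.hyps by (simp add: egf_nth_mult)
  finally show ?case .
qed

lemma integral_power_shifted_sum:
  assumes "finite A" "A \<subseteq> {1..}"
  shows "(\<integral>\<omega>. ((\<Sum>p\<in>A. X p \<omega>) + z) ^ N \<partial>M) = egf_nth (fps_exp z * moment_egf \<mu> ^ card A) N"
proof -
  have "(\<integral>\<omega>. ((\<Sum>p\<in>A. X p \<omega>) + z) ^ N \<partial>M) =
      (\<integral>\<omega>. (\<Sum>d\<le>N. real (N choose d) * (\<Sum>p\<in>A. X p \<omega>) ^ d * z ^ (N - d)) \<partial>M)"
    by (simp add: binomial_ring)
  also have "\<dots> = (\<Sum>d\<le>N. real (N choose d) * egf_nth (moment_egf \<mu> ^ card A) d * z ^ (N - d))"
    using assms
    by (subst Bochner_Integration.integral_sum)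
       (auto simp: integral_power_sum intro!: integrable_polynomial polynomial_in_intros)
  also have "\<dots> = egf_nth (fps_exp z * moment_egf \<mu> ^ card A) N"
    by (simp add: egf_nth_mult mult.commute[of "fps_exp z"])
  finally show ?thesis .
qed

lemma integral_shifted_sums_mult:
  assumes "A \<subseteq> {1..k}"
  shows "(\<integral>\<omega>. (psum X k \<omega> + z) ^ a * ((\<Sum>p\<in>A. X p \<omega>) + z) ^ m \<partial>M) =
    egf_nth (fps_nth_deriv m (fps_exp z * moment_egf \<mu> ^ card A) * moment_egf \<mu> ^ (k - card A)) a"
proof -
  define B where "B = {1..k} - A"
  have fin: "finite A" "finite B" and disj: "A \<inter> B = {}" and pos: "A \<subseteq> {1..}" "B \<subseteq> {1..}"
    using assms finite_subset by (auto simp: B_def)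
  have card_B: "card B = k - card A"
    using assms fin by (simp add: B_def card_Diff_subset)
  have "psum X k \<omega> = (\<Sum>p\<in>A. X p \<omega>) + (\<Sum>p\<in>B. X p \<omega>)" for \<omega>
    unfolding psum_def B_def using sum.subset_diff[OF assms, of "\<lambda>p. X p \<omega>"] by (simp add: add.commute)
  then have expand: "(psum X k \<omega> + z) ^ a * ((\<Sum>p\<in>A. X p \<omega>) + z) ^ m =
      (\<Sum>c\<le>a. real (a choose c) * (((\<Sum>p\<in>A. X p \<omega>) + z) ^ (m + c) * (\<Sum>p\<in>B. X p \<omega>) ^ (a - c)))" for \<omega>
    using binomial_ring[of "(\<Sum>p\<in>A. X p \<omega>) + z" "\<Sum>p\<in>B. X p \<omega>" a]
    by (simp add: sum_distrib_left sum_distrib_right power_add ac_simps)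
  have "(\<integral>\<omega>. (psum X k \<omega> + z) ^ a * ((\<Sum>p\<in>A. X p \<omega>) + z) ^ m \<partial>M) =
      (\<Sum>c\<le>a. real (a choose c) * (\<integral>\<omega>. ((\<Sum>p\<in>A. X p \<omega>) + z) ^ (m + c) * (\<Sum>p\<in>B. X p \<omega>) ^ (a - c) \<partial>M))"
    unfolding expand using fin pos
    by (subst Bochner_Integration.integral_sum) (auto intro!: integrable_polynomial polynomial_in_intros)
  also have "\<dots> = (\<Sum>c\<le>a. real (a choose c) * egf_nth (fps_exp z * moment_egf \<mu> ^ card A) (m + c) *
      egf_nth (moment_egf \<mu> ^ card B) (a - c))"
    using fin disj pos
    by (subst integral_mult_disjoint_sums[where g = "\<lambda>s. (s + z) ^ _" and h = "\<lambda>s. s ^ _"])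
       (auto simp: integral_power_shifted_sum integral_power_sum mult.assoc intro!: polynomial_in_intros)
  finally show ?thesis
    by (simp add: egf_nth_mult egf_nth_fps_nth_deriv card_B)
qed

lemma sum_compositions_integral_eq_sum_subsets:
  "(\<Sum>j=k..m. real (m choose j) *
      (\<Sum>l\<in>compositions k j. multinom j k l *
         (\<integral>\<omega>. (psum X k \<omega> + z) ^ a * (\<Prod>p=1..k. X p \<omega> ^ l p) \<partial>M)) * z ^ (m - j)) =
    (\<Sum>A\<in>Pow {1..k}. (-1) ^ (k - card A) *
      (\<integral>\<omega>. (psum X k \<omega> + z) ^ a * ((\<Sum>p\<in>A. X p \<omega>) + z) ^ m \<partial>M))"
proof -
  let ?f = "\<lambda>l \<omega>. (psum X k \<omega> + z) ^ a * (\<Prod>p=1..k. X p \<omega> ^ l p)"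
  let ?g = "\<lambda>A \<omega>. (psum X k \<omega> + z) ^ a * ((\<Sum>p\<in>A. X p \<omega>) + z) ^ m"
  have psum_poly: "polynomial_in X (psum X k)"
    unfolding psum_def by (rule polynomial_in_sum_vars) auto
  have integrable_f: "integrable M (?f l)" for l
    using psum_poly by (auto intro!: integrable_polynomial polynomial_in_intros)
  have integrable_g: "integrable M (?g A)" if "A \<in> Pow {1..k}" for A
    using that psum_poly finite_subset[of A "{1..k}"]
    by (auto intro!: integrable_polynomial polynomial_in_intros)
  have pointwise: "(\<Sum>j=k..m. \<Sum>l\<in>compositions k j. real (m choose j) * multinom j k l * z ^ (m - j) * ?f l \<omega>) =
      (\<Sum>A\<in>Pow {1..k}. (-1) ^ (k - card A) * ?g A \<omega>)" for \<omega>
  proof -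
    have "(\<Sum>j=k..m. \<Sum>l\<in>compositions k j. real (m choose j) * multinom j k l * z ^ (m - j) * ?f l \<omega>) =
        (psum X k \<omega> + z) ^ a * (\<Sum>j=k..m. real (m choose j) *
          (\<Sum>l\<in>compositions k j. multinom j k l * (\<Prod>p=1..k. X p \<omega> ^ l p)) * z ^ (m - j))"
      by (simp add: sum_distrib_left sum_distrib_right ac_simps)
    also have "\<dots> = (psum X k \<omega> + z) ^ a *
        (\<Sum>A\<in>Pow {1..k}. (-1) ^ (k - card A) * ((\<Sum>p\<in>A. X p \<omega>) + z) ^ m)"
      by (simp only: sum_binomial_compositions)
    finally show ?thesis
      by (simp add: sum_distrib_left ac_simps)
  qed
  have "(\<Sum>j=k..m. real (m choose j) * (\<Sum>l\<in>compositions k j. multinom j k l * (\<integral>\<omega>. ?f l \<omega> \<partial>M)) *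
      z ^ (m - j)) =
      (\<Sum>j=k..m. \<Sum>l\<in>compositions k j. real (m choose j) * multinom j k l * z ^ (m - j) * (\<integral>\<omega>. ?f l \<omega> \<partial>M))"
    by (simp add: sum_distrib_left sum_distrib_right ac_simps)
  also have "\<dots> = (\<integral>\<omega>. (\<Sum>j=k..m. \<Sum>l\<in>compositions k j.
      real (m choose j) * multinom j k l * z ^ (m - j) * ?f l \<omega>) \<partial>M)"
    using integrable_f by (simp add: Bochner_Integration.integral_sum)
  also have "\<dots> = (\<integral>\<omega>. (\<Sum>A\<in>Pow {1..k}. (-1) ^ (k - card A) * ?g A \<omega>) \<partial>M)"
    unfolding pointwise ..
  also have "\<dots> = (\<Sum>A\<in>Pow {1..k}. (-1) ^ (k - card A) * (\<integral>\<omega>. ?g A \<omega> \<partial>M))"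
    using integrable_g by (simp add: Bochner_Integration.integral_sum)
  finally show ?thesis .
qed

lemma sum_compositions_integral_eq_increment_egf:
  "(\<Sum>j=k..m. real (m choose j) *
      (\<Sum>l\<in>compositions k j. multinom j k l *
         (\<integral>\<omega>. (psum X k \<omega> + z) ^ a * (\<Prod>p=1..k. X p \<omega> ^ l p) \<partial>M)) * z ^ (m - j)) =
    egf_nth (increment_egf m z (moment_egf \<mu>) k) a"
proof -
  let ?D = "\<lambda>j. fps_nth_deriv m (fps_exp z * moment_egf \<mu> ^ j) * moment_egf \<mu> ^ (k - j)"
  have "(\<Sum>A\<in>Pow {1..k}. (-1) ^ (k - card A) *
      (\<integral>\<omega>. (psum X k \<omega> + z) ^ a * ((\<Sum>p\<in>A. X p \<omega>) + z) ^ m \<partial>M)) =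
      (\<Sum>A\<in>Pow {1..k}. (-1) ^ (k - card A) * egf_nth (?D (card A)) a)"
    by (intro sum.cong refl) (simp add: integral_shifted_sums_mult)
  also have "\<dots> = (\<Sum>j\<le>k. of_nat (k choose j) * ((-1) ^ (k - j) * egf_nth (?D j) a))"
    using sum_Pow_card[of "{1..k}" "\<lambda>j. (-1) ^ (k - j) * egf_nth (?D j) a"] by simp
  also have "\<dots> = egf_nth (increment_egf m z (moment_egf \<mu>) k) a"
    unfolding increment_egf_def egf_nth_sum fps_of_nat_mult_sign by (simp add: mult.assoc)
  finally show ?thesis
    by (simp only: sum_compositions_integral_eq_sum_subsets)
qed

lemma moment_egf_nth_0: "fps_nth (moment_egf \<mu>) 0 = 1"
  using integral_power[of 1 0] by (simp add: moment_egf_def prob_space)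

lemma stirlingY_eq_egf_nth: "stirlingY M X n k = egf_nth ((moment_egf \<mu> - 1) ^ k) n / fact k"
  using integral_power_sum[of "{1..i}" n for i] egf_nth_mult_power_diff_one[of 1 "moment_egf \<mu>" k n]
  by (simp add: stirlingY_def psum_def atLeast0AtMost mult_ac)

lemma rstirlingY_eq_egf_nth: "rstirlingY M X r n k = egf_nth (fps_exp (real r) * (moment_egf \<mu> - 1) ^ k) n / fact k"
  using integral_power_shifted_sum[of "{1..j}" "real r" n for j]
    egf_nth_mult_power_diff_one[of "fps_exp (real r)" "moment_egf \<mu>" k n]
  by (simp add: rstirlingY_def psum_def atLeast0AtMost mult_ac)

theorem rbellY_add:
  "rbellY M X r (m + n) x =
    (\<Sum>i=0..n. \<Sum>k=0..m. real (n choose i) * x ^ k * bellY M X i x * (1 / fact k) *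
       (\<Sum>j=k..m. real (m choose j) *
          (\<Sum>l\<in>compositions k j. multinom j k l *
             (\<integral>\<omega>. (psum X k \<omega> + real r) ^ (n - i) * (\<Prod>p=1..k. X p \<omega> ^ l p) \<partial>M))
          * real r ^ (m - j)))"
proof -
  let ?G = "moment_egf \<mu>" and ?E = "fps_exp (real r)"
  let ?Q = "increment_egf m (real r) ?G"
  (* For k > m the range j = k..m is empty, so the representation of ?Q k by compositions
     shows that it vanishes. *)
  have Q_eq_0: "?Q k = 0" if "m < k" for k
  proof (rule fps_ext)
    fix a
    show "fps_nth (?Q k) a = fps_nth 0 a"
      using sum_compositions_integral_eq_increment_egf[where k = k and m = m and z = "real r" and a = a] that
      by (simp add: egf_nth_def)
  qed
  have "egf_nth (?E * (?G - 1) ^ K) (m + n) = (\<Sum>k\<le>K. of_nat (K choose k) * egf_nth ((?G - 1) ^ (K - k) * ?Q k) n)"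
    for K
  proof -
    have "fps_nth_deriv m (?E * (?G - 1) ^ K) = (\<Sum>k\<le>K. of_nat (K choose k) * (?G - 1) ^ (K - k) * ?Q k)"
      unfolding fps_nth_deriv_mult_power_diff_one increment_egf_def
      by (rule binomial_alternating_regroup)
    then show ?thesis
      using egf_nth_fps_nth_deriv[of m "?E * (?G - 1) ^ K" n]
      by (simp add: egf_nth_sum mult.assoc flip: fps_of_nat)
  qed
  then have "rbellY M X r (m + n) x =
      (\<Sum>K\<le>m + n. x ^ K / fact K * (\<Sum>k\<le>K. of_nat (K choose k) * egf_nth ((?G - 1) ^ (K - k) * ?Q k) n))"
    by (simp add: rbellY_def rstirlingY_eq_egf_nth atLeast0AtMost mult_ac)
  also have "\<dots> = (\<Sum>i\<le>n. \<Sum>k\<le>m. of_nat (n choose i) * x ^ k / fact k *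
       (\<Sum>a\<le>i. x ^ a / fact a * egf_nth ((?G - 1) ^ a) i) * egf_nth (?Q k) (n - i))"
    by (rule egf_nth_exp_series_mult) (simp_all add: moment_egf_nth_0 Q_eq_0)
  also have "\<dots> = (\<Sum>i=0..n. \<Sum>k=0..m. real (n choose i) * x ^ k * bellY M X i x * (1 / fact k) *
       (\<Sum>j=k..m. real (m choose j) *
          (\<Sum>l\<in>compositions k j. multinom j k l *
             (\<integral>\<omega>. (psum X k \<omega> + real r) ^ (n - i) * (\<Prod>p=1..k. X p \<omega> ^ l p) \<partial>M))
          * real r ^ (m - j)))"
    unfolding sum_compositions_integral_eq_increment_egf by (simp add: bellY_def stirlingY_eq_egf_nth atLeast0AtMost mult_ac)
  finally show ?thesis .
qed

end

section \<open>Moments from the moment generating function\<close>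

lemma power_div_fact_le_exp:
  fixes z :: real
  assumes "0 \<le> z"
  shows "z ^ l / fact l \<le> exp z"
proof -
  have "(\<Sum>n\<in>{l}. z ^ n / fact n) \<le> (\<Sum>n. z ^ n / fact n)"
    using summable_exp_generic[of z] assms
    by (intro sum_le_suminf) (auto simp: divide_inverse mult.commute)
  then show ?thesis
    by (simp add: exp_def divide_inverse mult.commute)
qed

lemma abs_power_le_exp_sum:
  fixes y t :: real
  assumes "0 < t"
  shows "\<bar>y ^ l\<bar> \<le> fact l / t ^ l * (exp (t * y) + exp (- t * y))"
proof -
  have "(t * \<bar>y\<bar>) ^ l / fact l \<le> exp (t * \<bar>y\<bar>)"
    using assms by (intro power_div_fact_le_exp) simp
  also have "exp (t * \<bar>y\<bar>) \<le> exp (t * y) + exp (- t * y)"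
    by (cases "0 \<le> y") (auto simp: add_increasing add_increasing2)
  finally show ?thesis
    using assms by (simp add: power_abs field_simps)
qed

lemma integrable_power_if_integrable_exp:
  fixes Y :: "'a \<Rightarrow> real"
  assumes [measurable]: "Y \<in> borel_measurable M" and "r0 > 0"
    and exp_integrable: "\<And>t. \<bar>t\<bar> < r0 \<Longrightarrow> integrable M (\<lambda>\<omega>. exp (t * Y \<omega>))"
  shows "integrable M (\<lambda>\<omega>. Y \<omega> ^ l)"
proof -
  define t where "t = r0 / 2"
  have t: "0 < t" "\<bar>t\<bar> < r0" "\<bar>- t\<bar> < r0"
    using \<open>r0 > 0\<close> by (auto simp: t_def)
  show ?thesis
  proof (rule Bochner_Integration.integrable_bound)
    show "integrable M (\<lambda>\<omega>. fact l / t ^ l * (exp (t * Y \<omega>) + exp (- t * Y \<omega>)))"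
      using exp_integrable[OF t(2)] exp_integrable[OF t(3)] by auto
    show "AE \<omega> in M. norm (Y \<omega> ^ l) \<le> norm (fact l / t ^ l * (exp (t * Y \<omega>) + exp (- t * Y \<omega>)))"
      using abs_power_le_exp_sum[OF t(1)] by (intro AE_I2) (metis abs_ge_self order.trans real_norm_def)
  qed measurable
qed

lemma indep_moments_if_identically_distributed:
  fixes Y :: "'a \<Rightarrow> real"
  assumes "prob_space M" and Y [measurable]: "Y \<in> borel_measurable M"
    and Y_power: "\<And>l. integrable M (\<lambda>\<omega>. Y \<omega> ^ l)"
    and indep: "prob_space.indep_vars M (\<lambda>_. borel) X {1..}"
    and distr_eq: "\<And>j. j \<ge> 1 \<Longrightarrow> distr M borel (X j) = distr M borel Y"
  shows "indep_moments M X (\<lambda>l. \<integral>\<omega>. Y \<omega> ^ l \<partial>M)"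
proof -
  interpret prob_space M by fact
  have moments: "integrable M (\<lambda>\<omega>. X j \<omega> ^ l) \<and> (\<integral>\<omega>. X j \<omega> ^ l \<partial>M) = (\<integral>\<omega>. Y \<omega> ^ l \<partial>M)"
    if "j \<ge> 1" for j l
  proof -
    have X [measurable]: "X j \<in> borel_measurable M"
      using indep that unfolding indep_vars_def by auto
    have power [measurable]: "(\<lambda>y::real. y ^ l) \<in> borel_measurable borel"
      by measurable
    show ?thesis
      using Y_power[of l] distr_eq[OF that] integrable_distr_eq[OF Y power] integrable_distr_eq[OF X power]
        integral_distr[OF Y power] integral_distr[OF X power]
      by simp
  qed
  show ?thesis
    using indep moments by unfold_locales auto
qed

theorem theorem2p7:
  fixes M :: "'a measure" and Y :: "'a \<Rightarrow> real" and X :: "nat \<Rightarrow> 'a \<Rightarrow> real"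
    and r0 :: real and r m n :: nat and x :: real
  assumes "prob_space M"
    and "Y \<in> borel_measurable M"
    and "r0 > 0"
    and "\<And>t. \<bar>t\<bar> < r0 \<Longrightarrow> integrable M (\<lambda>\<omega>. exp (t * Y \<omega>))"
    and "prob_space.indep_vars M (\<lambda>_. borel) X {1..}"
    and "\<And>j. j \<ge> 1 \<Longrightarrow> distr M borel (X j) = distr M borel Y"
    and "r > 0"
  shows "rbellY M X r (m + n) x =
    (\<Sum>i=0..n. \<Sum>k=0..m. real (n choose i) * x ^ k * bellY M X i x * (1 / fact k) *
       (\<Sum>j=k..m. real (m choose j) *
          (\<Sum>l\<in>compositions k j. multinom j k l *
             (\<integral>\<omega>. (psum X k \<omega> + real r) ^ (n - i) * (\<Prod>p=1..k. X p \<omega> ^ l p) \<partial>M))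
          * real r ^ (m - j)))"
proof -
  have "integrable M (\<lambda>\<omega>. Y \<omega> ^ l)" for l
    using integrable_power_if_integrable_exp assms(2-4) .
  then interpret indep_moments M X "\<lambda>l. \<integral>\<omega>. Y \<omega> ^ l \<partial>M"
    using indep_moments_if_identically_distributed assms(1,2,5,6) by blast
  show ?thesis
    by (rule rbellY_add)
qed

end
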